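(* Fix an environment $(\mathcal{S},\mathcal{A},\mathcal{T},d_0,\_,\gamma)$ and a set $\Pi$ of stationary policies containing a nonempty open subset of $\Pi^+$. Then every pair of reward functions $(\mathcal{R},\mathcal{R}')$ with $J_{\mathcal{R}},J_{\mathcal{R}'}$ both non-trivial on $\Pi$ and not equivalent on $\Pi$ is hackable relative to $\Pi$ and this environment.
   Context: Setting: finite $\mathcal{S}$, finite $\mathcal{A}$ with $|\mathcal{A}|>1$, transition model $\mathcal{T}:\mathcal{S}\times\mathcal{A}\to\Delta(\mathcal{S})$, $d_0\in\Delta(\mathcal{S})$, $\gamma\in[0,1)$, all states reachable; an environment is an MDP without its reward; rewards are $\mathcal{R}:\mathcal{S}\times\mathcal{A}\to\mathbb{R}$. Stationary policies are identified with $\Delta(\mathcal{A})^{|\mathcal{S}|}\subset\mathbb{R}^{\mathcal{S}\times\mathcal{A}}$; $\Pi^+$ is the set with $\pi(a\mid s)>0$ for all $s,a$, and "open" means open in $\Pi^+$. $J_{\mathcal{R}}(\pi)=\mathbb{E}\big[\sum_{t\ge0}\gamma^t\mathcal{R}(s_t,a_t)\big]$ with $s_0\sim d_0$, $a_t\sim\pi(\cdot\mid s_t)$, $s_{t+1}\sim\mathcal{T}(\cdot\mid s_t,a_t)$. $J$ is trivial on $\Pi$ if constant on $\Pi$; $J_1,J_2$ equivalent on $\Pi$ if for all $\pi,\pi'\in\Pi$, $J_1(\pi)\ge J_1(\pi')\iff J_2(\pi)\ge J_2(\pi')$. $(\mathcal{R},\mathcal{R}')$ is hackable relative to $\Pi$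 if there are $\pi,\pi'\in\Pi$ with $J_{\mathcal{R}}(\pi)>J_{\mathcal{R}}(\pi')$ and $J_{\mathcal{R}'}(\pi')>J_{\mathcal{R}'}(\pi)$. *)

theory Defs
  imports "HOL-Analysis.Analysis"
begin

text \<open>A transition model is T :: 's => 'a => 's => real (T s a s' = probability of s'),
  an initial distribution d0 :: 's => real, a discount factor gamma.
  Stationary policies are functions pi :: 's => 'a => real with pi s a = pi(a | s),
  i.e. elements of R^(S x A); the topology is the product (Euclidean) topology.\<close>

definition is_distr :: "('b::finite \<Rightarrow> real) \<Rightarrow> bool" where
  "is_distr p \<longleftrightarrow> (\<forall>x. p x \<ge> 0) \<and> (\<Sum>x\<in>UNIV. p x) = 1"

definition all_reachable ::
  "('s::finite \<Rightarrow> 'a::finite \<Rightarrow> 's \<Rightarrow> real) \<Rightarrow> ('s \<Rightarrow> real) \<Rightarrow> bool" where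
  "all_reachable T d0 \<longleftrightarrow>
     (\<forall>s. \<exists>s0. d0 s0 > 0 \<and> (s0, s) \<in> {(x, y). \<exists>a. T x a y > 0}\<^sup>*)"

definition environment ::
  "('s::finite \<Rightarrow> 'a::finite \<Rightarrow> 's \<Rightarrow> real) \<Rightarrow> ('s \<Rightarrow> real) \<Rightarrow> real \<Rightarrow> bool" where
  "environment T d0 \<gamma> \<longleftrightarrow>
     CARD('a) > 1 \<and> (\<forall>s a. is_distr (T s a)) \<and> is_distr d0 \<and>
     0 \<le> \<gamma> \<and> \<gamma> < 1 \<and> all_reachable T d0"

definition policies :: "('s::finite \<Rightarrow> 'a::finite \<Rightarrow> real) set" where
  "policies = {\<pi>. \<forall>s. is_distr (\<pi> s)}"

definition pos_policies :: "('s::finite \<Rightarrow> 'a::finite \<Rightarrow> real) set" where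
  "pos_policies = {\<pi>. \<pi> \<in> policies \<and> (\<forall>s a. \<pi> s a > 0)}"

fun state_dist ::
  "('s::finite \<Rightarrow> 'a::finite \<Rightarrow> 's \<Rightarrow> real) \<Rightarrow> ('s \<Rightarrow> real) \<Rightarrow> ('s \<Rightarrow> 'a \<Rightarrow> real)
     \<Rightarrow> nat \<Rightarrow> 's \<Rightarrow> real" where
  "state_dist T d0 \<pi> 0 s' = d0 s'"
| "state_dist T d0 \<pi> (Suc t) s' =
     (\<Sum>s\<in>UNIV. \<Sum>a\<in>UNIV. state_dist T d0 \<pi> t s * \<pi> s a * T s a s')"

definition J ::
  "('s::finite \<Rightarrow> 'a::finite \<Rightarrow> 's \<Rightarrow> real) \<Rightarrow> ('s \<Rightarrow> real) \<Rightarrow> real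
     \<Rightarrow> ('s \<Rightarrow> 'a \<Rightarrow> real) \<Rightarrow> ('s \<Rightarrow> 'a \<Rightarrow> real) \<Rightarrow> real" where
  "J T d0 \<gamma> R \<pi> =
     (\<Sum>t. \<gamma> ^ t * (\<Sum>s\<in>UNIV. \<Sum>a\<in>UNIV. state_dist T d0 \<pi> t s * \<pi> s a * R s a))"

definition trivial_on :: "('p \<Rightarrow> real) \<Rightarrow> 'p set \<Rightarrow> bool" where
  "trivial_on f P \<longleftrightarrow> (\<forall>p\<in>P. \<forall>q\<in>P. f p = f q)"

definition equivalent_on :: "('p \<Rightarrow> real) \<Rightarrow> ('p \<Rightarrow> real) \<Rightarrow> 'p set \<Rightarrow> bool" where
  "equivalent_on f g P \<longleftrightarrow> (\<forall>p\<in>P. \<forall>q\<in>P. f p \<ge> f q \<longleftrightarrow> g p \<ge> g q)"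

definition hackable ::
  "('s::finite \<Rightarrow> 'a::finite \<Rightarrow> 's \<Rightarrow> real) \<Rightarrow> ('s \<Rightarrow> real) \<Rightarrow> real
     \<Rightarrow> ('s \<Rightarrow> 'a \<Rightarrow> real) set \<Rightarrow> ('s \<Rightarrow> 'a \<Rightarrow> real) \<Rightarrow> ('s \<Rightarrow> 'a \<Rightarrow> real) \<Rightarrow> bool" where
  "hackable T d0 \<gamma> Pol R R' \<longleftrightarrow>
     (\<exists>\<pi>\<in>Pol. \<exists>\<pi>'\<in>Pol. J T d0 \<gamma> R \<pi> > J T d0 \<gamma> R \<pi>' \<and> J T d0 \<gamma> R' \<pi>' > J T d0 \<gamma> R' \<pi>)"

end

theory Submission
  imports Defs
begin

(* J_R(pi) = <occ_pi, R> for the discounted state-action occupancy measure occ_pi, so value gaps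
   between two policies are the linear functionals <-, R> and <-, R'> evaluated at a difference
   of occupancy measures.  Such differences lie in the space D of solutions of the homogeneous
   flow equation vanishing on the states that a positive policy pi0 in U never visits.
   Conversely, for v in D and small eps > 0, occ_pi0 + eps v is the occupancy measure of a
   positive policy close to pi0, hence of a policy in U.  So if (R, R') is not hackable, the image
   of D under v |-> (<v, R>, <v, R'>) is a subspace of R^2 contained in the closed first and third
   quadrants; as both functionals are nonzero on D, it is a line of positive slope, and the two
   value gaps of any pair of policies have the same sign, i.e. J_R and J_R' are equivalent. *)

lemma sgn_fst_eq_sgn_snd_if_subspace_in_closed_quadrants:
  fixes K :: "(real \<times> real) set"
  assumes K: "subspace K"
    and closed_quadrants: "\<And>x y. (x, y) \<in> K \<Longrightarrow> 0 \<le> x * y"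
    and fst_nonzero: "(a, b) \<in> K" "a \<noteq> 0"
    and snd_nonzero: "(c, d) \<in> K" "d \<noteq> 0"
    and xy: "(x, y) \<in> K"
  shows "sgn x = sgn y"
proof -
  have snd_zero: "y' = 0" if "(0, y') \<in> K" for y'
  proof (rule ccontr)
    assume "y' \<noteq> 0"
    then have "(a, - sgn a) = (a, b) + ((- sgn a - b) / y') *\<^sub>R (0, y')"
      by simp
    also have "\<dots> \<in> K"
      using K fst_nonzero(1) that by (intro subspace_add subspace_scale)
    finally show False
      using closed_quadrants fst_nonzero(2) by (fastforce simp: sgn_if split: if_splits)
  qed
  have fst_zero: "x' = 0" if "(x', 0) \<in> K" for x'
  proof (rule ccontr)
    assume "x' \<noteq> 0"
    then have "(- sgn d, d) = (c, d) + ((- sgn d - c) / x') *\<^sub>R (x', 0)"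
      by simp
    also have "\<dots> \<in> K"
      using K snd_nonzero(1) that by (intro subspace_add subspace_scale)
    finally show False
      using closed_quadrants snd_nonzero(2) by (fastforce simp: sgn_if split: if_splits)
  qed
  show ?thesis
    using closed_quadrants[OF xy] snd_zero fst_zero xy
    by (cases x "0::real" rule: linorder_cases; cases y "0::real" rule: linorder_cases)
       (auto simp: zero_le_mult_iff)
qed

lemma tendsto_coordinatewise:
  fixes f :: "'x \<Rightarrow> 'i \<Rightarrow> 'b::topological_space"
  assumes "\<And>i. ((\<lambda>x. f x i) \<longlongrightarrow> l i) F"
  shows "(f \<longlongrightarrow> l) F"
proof -
  have "limitin (product_topology (\<lambda>i. euclidean) UNIV) f l F"
    using assms by (simp add: limitin_componentwise)
  then show ?thesis
    by (simp add: euclidean_product_topology)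
qed

lemma policy_nonneg: "\<pi> \<in> policies \<Longrightarrow> 0 \<le> \<pi> s a"
  by (simp add: policies_def is_distr_def)

lemma policy_sum_eq_1: "\<pi> \<in> policies \<Longrightarrow> (\<Sum>a\<in>UNIV. \<pi> s a) = 1"
  by (simp add: policies_def is_distr_def)

lemma policy_le_1: "\<pi> \<in> policies \<Longrightarrow> \<pi> s a \<le> 1"
  using member_le_sum[of a UNIV "\<pi> s"] policy_nonneg policy_sum_eq_1 by fastforce

lemma pos_policies_subset_policies: "pos_policies \<subseteq> policies"
  by (auto simp: pos_policies_def)

definition sa_inner :: "('s::finite \<Rightarrow> 'a::finite \<Rightarrow> real) \<Rightarrow> ('s \<Rightarrow> 'a \<Rightarrow> real) \<Rightarrow> real" where
  "sa_inner v Q = (\<Sum>s\<in>UNIV. \<Sum>a\<in>UNIV. v s a * Q s a)"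

lemma sa_inner_add: "sa_inner (\<lambda>s a. u s a + v s a) Q = sa_inner u Q + sa_inner v Q"
  by (simp add: sa_inner_def distrib_right sum.distrib)

lemma sa_inner_diff: "sa_inner (\<lambda>s a. u s a - v s a) Q = sa_inner u Q - sa_inner v Q"
  by (simp add: sa_inner_def left_diff_distrib sum_subtractf)

lemma sa_inner_scale: "sa_inner (\<lambda>s a. c * v s a) Q = c * sa_inner v Q"
  by (simp add: sa_inner_def sum_distrib_left mult.assoc)

definition induced_policy ::
  "('s \<Rightarrow> 'a::finite \<Rightarrow> real) \<Rightarrow> ('s \<Rightarrow> 'a \<Rightarrow> real) \<Rightarrow> 's \<Rightarrow> 'a \<Rightarrow> real" where
  "induced_policy \<pi>0 x s a =
     (if (\<Sum>a'\<in>UNIV. x s a') = 0 then \<pi>0 s a else x s a / (\<Sum>a'\<in>UNIV. x s a'))"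

lemma induced_policy_pos:
  assumes "\<pi>0 \<in> pos_policies" and x: "\<And>s. (\<forall>a. 0 < x s a) \<or> (\<forall>a. x s a = 0)"
  shows "induced_policy \<pi>0 x \<in> pos_policies"
proof -
  have "0 < induced_policy \<pi>0 x s a \<and> (\<Sum>a\<in>UNIV. induced_policy \<pi>0 x s a) = 1" for s a
  proof (cases "\<forall>a. x s a = 0")
    case True
    then show ?thesis
      using assms(1) by (simp add: induced_policy_def pos_policies_def policy_sum_eq_1)
  next
    case False
    then have "0 < (\<Sum>a\<in>UNIV. x s a)" and "0 < x s a"
      using x[of s] by (auto intro: sum_pos)
    then show ?thesis
      by (simp add: induced_policy_def flip: sum_divide_distrib)
  qed
  then show ?thesis
    by (auto simp: pos_policies_def policies_def is_distr_def less_imp_le)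
qed

lemma factor_induced_policy:
  assumes "\<And>s. (\<forall>a. 0 < x s a) \<or> (\<forall>a. x s a = 0)"
  shows "x s a = (\<Sum>a'\<in>UNIV. x s a') * induced_policy \<pi>0 x s a"
  using assms[of s] sum_pos[of UNIV "x s"] by (auto simp: induced_policy_def)

lemma tendsto_induced_policy:
  assumes lim: "\<And>s a. ((\<lambda>\<epsilon>. x \<epsilon> s a) \<longlongrightarrow> y s a) F"
    and unvisited: "\<And>\<epsilon> s a. (\<Sum>a'\<in>UNIV. y s a') = 0 \<Longrightarrow> x \<epsilon> s a = 0"
  shows "((\<lambda>\<epsilon>. induced_policy \<pi> (x \<epsilon>)) \<longlongrightarrow> induced_policy \<pi> y) F"
proof (intro tendsto_coordinatewise)
  fix s a
  show "((\<lambda>\<epsilon>. induced_policy \<pi> (x \<epsilon>) s a) \<longlongrightarrow> induced_policy \<pi> y s a) F"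
  proof (cases "(\<Sum>a'\<in>UNIV. y s a') = 0")
    case True
    then show ?thesis
      using unvisited by (simp add: induced_policy_def)
  next
    case False
    have sum_lim: "((\<lambda>\<epsilon>. \<Sum>a'\<in>UNIV. x \<epsilon> s a') \<longlongrightarrow> (\<Sum>a'\<in>UNIV. y s a')) F"
      by (intro tendsto_sum lim)
    have "((\<lambda>\<epsilon>. x \<epsilon> s a / (\<Sum>a'\<in>UNIV. x \<epsilon> s a')) \<longlongrightarrow> induced_policy \<pi> y s a) F"
      using tendsto_divide[OF lim sum_lim False] False by (simp add: induced_policy_def)
    moreover have "\<forall>\<^sub>F \<epsilon> in F. x \<epsilon> s a / (\<Sum>a'\<in>UNIV. x \<epsilon> s a') = induced_policy \<pi> (x \<epsilon>) s a"
      using tendsto_imp_eventually_ne[OF sum_lim False]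
      by eventually_elim (simp add: induced_policy_def)
    ultimately show ?thesis
      by (rule Lim_transform_eventually)
  qed
qed

locale discounted_mdp =
  fixes T :: "'s::finite \<Rightarrow> 'a::finite \<Rightarrow> 's \<Rightarrow> real" and d0 :: "'s \<Rightarrow> real" and \<gamma> :: real
  assumes transition_distr: "\<And>s a. is_distr (T s a)" and initial_distr: "is_distr d0"
    and discount_nonneg: "0 \<le> \<gamma>" and discount_less_1: "\<gamma> < 1"
begin

definition next_dist :: "('s \<Rightarrow> 'a \<Rightarrow> real) \<Rightarrow> ('s \<Rightarrow> real) \<Rightarrow> 's \<Rightarrow> real" where
  "next_dist \<pi> x s' = sa_inner (\<lambda>s a. x s * \<pi> s a) (\<lambda>s a. T s a s')"

lemma transition_nonneg: "0 \<le> T s a s'"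
  using transition_distr[of s a] by (simp add: is_distr_def)

lemma transition_sum_eq_1: "(\<Sum>s'\<in>UNIV. T s a s') = 1"
  using transition_distr[of s a] by (simp add: is_distr_def)

lemma state_dist_Suc: "state_dist T d0 \<pi> (Suc t) = next_dist \<pi> (state_dist T d0 \<pi> t)"
  by (simp add: fun_eq_iff next_dist_def sa_inner_def)

lemma next_dist_nonneg: "\<pi> \<in> policies \<Longrightarrow> (\<And>s. 0 \<le> x s) \<Longrightarrow> 0 \<le> next_dist \<pi> x s'"
  by (simp add: next_dist_def sa_inner_def sum_nonneg policy_nonneg transition_nonneg)

lemma next_dist_diff: "next_dist \<pi> (\<lambda>s. x s - y s) s' = next_dist \<pi> x s' - next_dist \<pi> y s'"
  by (simp add: next_dist_def left_diff_distrib sa_inner_diff)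

lemma abs_next_dist_le: "\<pi> \<in> policies \<Longrightarrow> \<bar>next_dist \<pi> x s'\<bar> \<le> next_dist \<pi> (\<lambda>s. \<bar>x s\<bar>) s'"
  unfolding next_dist_def sa_inner_def
  by (rule order_trans[OF sum_abs sum_mono], rule order_trans[OF sum_abs])
     (simp add: abs_mult policy_nonneg transition_nonneg)

lemma sum_next_dist:
  assumes \<pi>: "\<pi> \<in> policies"
  shows "(\<Sum>s'\<in>UNIV. next_dist \<pi> x s') = (\<Sum>s\<in>UNIV. x s)"
proof -
  have "(\<Sum>s'\<in>UNIV. next_dist \<pi> x s') = (\<Sum>s\<in>UNIV. \<Sum>a\<in>UNIV. x s * \<pi> s a * (\<Sum>s'\<in>UNIV. T s a s'))"
    unfolding next_dist_def sa_inner_def sum_distrib_left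
    by (subst sum.swap, rule sum.cong[OF refl], rule sum.swap)
  also have "\<dots> = (\<Sum>s\<in>UNIV. x s)"
    by (simp add: transition_sum_eq_1 policy_sum_eq_1[OF \<pi>] flip: sum_distrib_left)
  finally show ?thesis .
qed

lemma state_dist_nonneg: "\<pi> \<in> policies \<Longrightarrow> 0 \<le> state_dist T d0 \<pi> t s"
  by (induction t arbitrary: s)
     (use initial_distr in \<open>simp_all add: is_distr_def state_dist_Suc next_dist_nonneg\<close>)

lemma state_dist_sum_eq_1: "\<pi> \<in> policies \<Longrightarrow> (\<Sum>s\<in>UNIV. state_dist T d0 \<pi> t s) = 1"
  by (induction t)
     (use initial_distr in \<open>simp_all add: is_distr_def state_dist_Suc sum_next_dist\<close>)

lemma state_dist_le_1: "\<pi> \<in> policies \<Longrightarrow> state_dist T d0 \<pi> t s \<le> 1"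
  using member_le_sum[of s UNIV "state_dist T d0 \<pi> t"] state_dist_nonneg state_dist_sum_eq_1
  by fastforce

definition state_occupancy :: "('s \<Rightarrow> 'a \<Rightarrow> real) \<Rightarrow> 's \<Rightarrow> real" where
  "state_occupancy \<pi> s = (\<Sum>t. \<gamma> ^ t * state_dist T d0 \<pi> t s)"

definition occupancy :: "('s \<Rightarrow> 'a \<Rightarrow> real) \<Rightarrow> 's \<Rightarrow> 'a \<Rightarrow> real" where
  "occupancy \<pi> s a = state_occupancy \<pi> s * \<pi> s a"

lemma discounted_state_dist_sums:
  assumes "\<pi> \<in> policies"
  shows "(\<lambda>t. \<gamma> ^ t * state_dist T d0 \<pi> t s) sums state_occupancy \<pi> s"
proof -
  have "summable (\<lambda>t. \<gamma> ^ t * state_dist T d0 \<pi> t s)"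
  proof (rule summable_comparison_test[OF _ summable_geometric])
    show "\<exists>N. \<forall>t\<ge>N. norm (\<gamma> ^ t * state_dist T d0 \<pi> t s) \<le> \<gamma> ^ t"
      using state_dist_nonneg[OF assms] state_dist_le_1[OF assms] discount_nonneg
      by (auto simp: abs_mult intro!: mult_left_le)
    show "norm \<gamma> < 1"
      using discount_nonneg discount_less_1 by simp
  qed
  then show ?thesis
    unfolding state_occupancy_def by (rule summable_sums)
qed

lemma state_occupancy_nonneg: "\<pi> \<in> policies \<Longrightarrow> 0 \<le> state_occupancy \<pi> s"
  unfolding state_occupancy_def
  using discounted_state_dist_sums state_dist_nonneg discount_nonneg
  by (auto intro!: suminf_nonneg sums_summable)

lemma sum_occupancy: "\<pi> \<in> policies \<Longrightarrow> (\<Sum>a\<in>UNIV. occupancy \<pi> s a) = state_occupancy \<pi> s"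
  by (simp add: occupancy_def policy_sum_eq_1 flip: sum_distrib_left)

lemma discounted_sa_inner_sums:
  assumes "\<pi> \<in> policies"
  shows "(\<lambda>t. \<gamma> ^ t * sa_inner (\<lambda>s a. state_dist T d0 \<pi> t s * \<pi> s a) Q) sums sa_inner (occupancy \<pi>) Q"
proof -
  have "(\<lambda>t. \<Sum>s\<in>UNIV. \<Sum>a\<in>UNIV. \<gamma> ^ t * state_dist T d0 \<pi> t s * (\<pi> s a * Q s a))
      sums (\<Sum>s\<in>UNIV. \<Sum>a\<in>UNIV. state_occupancy \<pi> s * (\<pi> s a * Q s a))"
    by (intro sums_sum sums_mult2 discounted_state_dist_sums assms)
  then show ?thesis
    unfolding sa_inner_def occupancy_def sum_distrib_left by (simp only: mult.assoc)
qed

lemma J_eq_sa_inner_occupancy: "\<pi> \<in> policies \<Longrightarrow> J T d0 \<gamma> R \<pi> = sa_inner (occupancy \<pi>) R"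
  unfolding J_def sa_inner_def
  by (rule sums_unique[OF discounted_sa_inner_sums, symmetric, unfolded sa_inner_def])

lemma next_dist_state_occupancy:
  "next_dist \<pi> (state_occupancy \<pi>) s' = sa_inner (occupancy \<pi>) (\<lambda>s a. T s a s')"
  by (simp add: next_dist_def occupancy_def[abs_def])

lemma state_occupancy_flow:
  assumes "\<pi> \<in> policies"
  shows "state_occupancy \<pi> s' = d0 s' + \<gamma> * next_dist \<pi> (state_occupancy \<pi>) s'"
proof -
  have "(\<lambda>t. \<gamma> * (\<gamma> ^ t * sa_inner (\<lambda>s a. state_dist T d0 \<pi> t s * \<pi> s a) (\<lambda>s a. T s a s')))
      sums (\<gamma> * sa_inner (occupancy \<pi>) (\<lambda>s a. T s a s'))"
    by (intro sums_mult discounted_sa_inner_sums assms)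
  then have "(\<lambda>t. \<gamma> ^ Suc t * state_dist T d0 \<pi> (Suc t) s')
      sums (\<gamma> * sa_inner (occupancy \<pi>) (\<lambda>s a. T s a s'))"
    by (simp add: state_dist_Suc next_dist_def mult.assoc)
  then have "(\<lambda>t. \<gamma> ^ t * state_dist T d0 \<pi> t s')
      sums (\<gamma> * sa_inner (occupancy \<pi>) (\<lambda>s a. T s a s') + d0 s')"
    using sums_Suc_iff[of "\<lambda>t. \<gamma> ^ t * state_dist T d0 \<pi> t s'"] by simp
  then show ?thesis
    using sums_unique2[OF discounted_state_dist_sums[OF assms]]
    by (simp add: next_dist_state_occupancy)
qed

lemma state_occupancy_unique:
  assumes \<pi>: "\<pi> \<in> policies" and x: "\<And>s'. x s' = d0 s' + \<gamma> * next_dist \<pi> x s'"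
  shows "x = state_occupancy \<pi>"
proof -
  define \<delta> where "\<delta> = (\<lambda>s. x s - state_occupancy \<pi> s)"
  have "\<delta> s' = \<gamma> * next_dist \<pi> \<delta> s'" for s'
    using x[of s'] state_occupancy_flow[OF \<pi>, of s']
    by (simp add: \<delta>_def next_dist_diff right_diff_distrib)
  then have "\<bar>\<delta> s'\<bar> \<le> \<gamma> * next_dist \<pi> (\<lambda>s. \<bar>\<delta> s\<bar>) s'" for s'
    using abs_next_dist_le[OF \<pi>] discount_nonneg by (metis abs_mult abs_of_nonneg mult_left_mono)
  then have "(\<Sum>s\<in>UNIV. \<bar>\<delta> s\<bar>) \<le> (\<Sum>s'\<in>UNIV. \<gamma> * next_dist \<pi> (\<lambda>s. \<bar>\<delta> s\<bar>) s')"
    by (rule sum_mono)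
  also have "\<dots> = \<gamma> * (\<Sum>s\<in>UNIV. \<bar>\<delta> s\<bar>)"
    by (simp add: sum_next_dist[OF \<pi>] flip: sum_distrib_left)
  finally have "(1 - \<gamma>) * (\<Sum>s\<in>UNIV. \<bar>\<delta> s\<bar>) \<le> 0"
    by (simp add: algebra_simps)
  then have "(\<Sum>s\<in>UNIV. \<bar>\<delta> s\<bar>) = 0"
    using discount_less_1 by (simp add: mult_le_0_iff order_antisym sum_nonneg)
  then show ?thesis
    by (simp add: fun_eq_iff \<delta>_def sum_nonneg_eq_0_iff)
qed

lemma state_dist_dominated:
  assumes "\<pi> \<in> policies" "\<pi>0 \<in> policies" "0 \<le> c" and dom: "\<And>s a. c * \<pi> s a \<le> \<pi>0 s a"
  shows "c ^ t * state_dist T d0 \<pi> t s' \<le> state_dist T d0 \<pi>0 t s'"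
proof (induction t arbitrary: s')
  case 0
  then show ?case by simp
next
  case (Suc t)
  have "c ^ Suc t * state_dist T d0 \<pi> (Suc t) s'
      = (\<Sum>s\<in>UNIV. \<Sum>a\<in>UNIV. (c ^ t * state_dist T d0 \<pi> t s) * (c * \<pi> s a) * T s a s')"
    by (simp add: sum_distrib_left mult_ac)
  also have "\<dots> \<le> (\<Sum>s\<in>UNIV. \<Sum>a\<in>UNIV. state_dist T d0 \<pi>0 t s * \<pi>0 s a * T s a s')"
    using Suc.IH dom assms(1-3)
    by (intro sum_mono mult_right_mono mult_mono)
       (simp_all add: state_dist_nonneg policy_nonneg transition_nonneg)
  finally show ?case by simp
qed

lemma state_occupancy_eq_0:
  assumes \<pi>: "\<pi> \<in> policies" and \<pi>0: "\<pi>0 \<in> pos_policies" and zero: "state_occupancy \<pi>0 s = 0"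
  shows "state_occupancy \<pi> s = 0"
proof -
  have \<pi>0_policy: "\<pi>0 \<in> policies"
    using \<pi>0 pos_policies_subset_policies by blast
  define c where "c = Min (range (case_prod \<pi>0))"
  have "0 < c"
    unfolding c_def using \<pi>0 by (subst Min_gr_iff) (auto simp: pos_policies_def)
  have "c * \<pi> s a \<le> \<pi>0 s a" for s a
  proof -
    have "c * \<pi> s a \<le> c"
      using \<open>0 < c\<close> policy_le_1[OF \<pi>] by (simp add: mult_left_le)
    also have "c \<le> \<pi>0 s a"
      unfolding c_def by (rule Min_le) auto
    finally show ?thesis .
  qed
  then have unvisited: "state_dist T d0 \<pi> t s = 0" if "state_dist T d0 \<pi>0 t s = 0" for t
    using state_dist_dominated[OF \<pi> \<pi>0_policy less_imp_le[OF \<open>0 < c\<close>], of t s] that \<open>0 < c\<close>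
      state_dist_nonneg[OF \<pi>, of t s] zero_less_power[OF \<open>0 < c\<close>, of t]
    by (auto simp: mult_le_0_iff)
  have "\<gamma> ^ t * state_dist T d0 \<pi>0 t s = 0" for t
    using discounted_state_dist_sums[OF \<pi>0_policy, of s] zero state_dist_nonneg[OF \<pi>0_policy]
      discount_nonneg
    by (simp add: sums_iff suminf_eq_zero_iff state_occupancy_def)
  then have "\<gamma> ^ t * state_dist T d0 \<pi> t s = 0" for t
    using unvisited by auto
  then show ?thesis
    unfolding state_occupancy_def by (simp only: suminf_zero)
qed

lemma occupancy_flow:
  "\<pi> \<in> policies \<Longrightarrow> (\<Sum>a\<in>UNIV. occupancy \<pi> s' a) = d0 s' + \<gamma> * sa_inner (occupancy \<pi>) (\<lambda>s a. T s a s')"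
  using state_occupancy_flow by (simp add: sum_occupancy next_dist_state_occupancy)

lemma occupancy_eq_if_flow:
  assumes \<pi>: "\<pi> \<in> policies"
    and flow: "\<And>s'. (\<Sum>a\<in>UNIV. x s' a) = d0 s' + \<gamma> * sa_inner x (\<lambda>s a. T s a s')"
    and factor: "\<And>s a. x s a = (\<Sum>a'\<in>UNIV. x s a') * \<pi> s a"
  shows "occupancy \<pi> = x"
proof -
  define m where "m = (\<lambda>s. \<Sum>a\<in>UNIV. x s a)"
  have x_eq: "x = (\<lambda>s a. m s * \<pi> s a)"
    unfolding m_def by (intro ext factor)
  have "m s' = d0 s' + \<gamma> * next_dist \<pi> m s'" for s'
    unfolding next_dist_def x_eq[symmetric] using flow by (simp add: m_def)
  then have "m = state_occupancy \<pi>"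
    by (rule state_occupancy_unique[OF \<pi>])
  then show ?thesis
    by (simp add: x_eq fun_eq_iff occupancy_def)
qed

(* The directions in which occupancy \<pi>0 can be moved inside the set of occupancy measures. *)
definition occupancy_directions :: "('s \<Rightarrow> 'a \<Rightarrow> real) \<Rightarrow> ('s \<Rightarrow> 'a \<Rightarrow> real) set" where
  "occupancy_directions \<pi>0 =
     {v. (\<forall>s'. (\<Sum>a\<in>UNIV. v s' a) = \<gamma> * sa_inner v (\<lambda>s a. T s a s')) \<and>
         (\<forall>s a. state_occupancy \<pi>0 s = 0 \<longrightarrow> v s a = 0)}"

lemma occupancy_diff_in_directions:
  assumes "\<pi> \<in> policies" "\<pi>' \<in> policies" "\<pi>0 \<in> pos_policies"
  shows "(\<lambda>s a. occupancy \<pi> s a - occupancy \<pi>' s a) \<in> occupancy_directions \<pi>0"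
  using occupancy_flow[OF assms(1)] occupancy_flow[OF assms(2)]
    state_occupancy_eq_0[OF assms(1,3)] state_occupancy_eq_0[OF assms(2,3)]
  by (simp add: occupancy_directions_def sum_subtractf sa_inner_diff right_diff_distrib
      occupancy_def[abs_def])

lemma subspace_sa_inner_image_occupancy_directions:
  "subspace ((\<lambda>v. (sa_inner v Q, sa_inner v Q')) ` occupancy_directions \<pi>0)" (is "subspace ?K")
  unfolding subspace_def
proof (intro conjI ballI allI)
  show "0 \<in> ?K"
    by (rule image_eqI[of _ _ "\<lambda>s a. 0"])
       (simp_all add: sa_inner_def occupancy_directions_def zero_prod_def)
next
  fix p q assume "p \<in> ?K" "q \<in> ?K"
  then obtain u v where "u \<in> occupancy_directions \<pi>0" "v \<in> occupancy_directions \<pi>0"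
    "p = (sa_inner u Q, sa_inner u Q')" "q = (sa_inner v Q, sa_inner v Q')"
    by blast
  then show "p + q \<in> ?K"
    by (intro image_eqI[of _ _ "\<lambda>s a. u s a + v s a"])
       (simp_all add: sa_inner_add occupancy_directions_def sum.distrib distrib_left)
next
  fix c p assume "p \<in> ?K"
  then obtain v where "v \<in> occupancy_directions \<pi>0" "p = (sa_inner v Q, sa_inner v Q')"
    by blast
  then show "c *\<^sub>R p \<in> ?K"
    by (intro image_eqI[of _ _ "\<lambda>s a. c * v s a"])
       (simp_all add: sa_inner_scale occupancy_directions_def mult.left_commute
         flip: sum_distrib_left)
qed

lemma induced_policy_occupancy: "\<pi> \<in> policies \<Longrightarrow> induced_policy \<pi> (occupancy \<pi>) = \<pi>"
  by (simp add: fun_eq_iff induced_policy_def sum_occupancy) (simp add: occupancy_def)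

lemma occupancy_perturbation:
  assumes \<pi>0: "\<pi>0 \<in> pos_policies" and v: "v \<in> occupancy_directions \<pi>0"
  shows "\<exists>p. (p \<longlongrightarrow> \<pi>0) (at_right 0) \<and>
    (\<forall>\<^sub>F \<epsilon> in at_right 0. p \<epsilon> \<in> pos_policies \<and>
       occupancy (p \<epsilon>) = (\<lambda>s a. occupancy \<pi>0 s a + \<epsilon> * v s a))"
proof -
  have \<pi>0_policy: "\<pi>0 \<in> policies"
    using \<pi>0 pos_policies_subset_policies by blast
  define x where "x \<epsilon> = (\<lambda>s a. occupancy \<pi>0 s a + \<epsilon> * v s a)" for \<epsilon> :: real
  define p where "p = (\<lambda>\<epsilon>. induced_policy \<pi>0 (x \<epsilon>))"
  have x_flow: "(\<Sum>a\<in>UNIV. x \<epsilon> s' a) = d0 s' + \<gamma> * sa_inner (x \<epsilon>) (\<lambda>s a. T s a s')" for \<epsilon> s'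
    using occupancy_flow[OF \<pi>0_policy, of s'] v
    by (simp add: x_def occupancy_directions_def sum.distrib sa_inner_add sa_inner_scale
        algebra_simps flip: sum_distrib_left)
  have x_unvisited: "x \<epsilon> s a = 0" if "state_occupancy \<pi>0 s = 0" for \<epsilon> s a
    using v that by (simp add: x_def occupancy_directions_def occupancy_def)
  have x_lim: "((\<lambda>\<epsilon>. x \<epsilon> s a) \<longlongrightarrow> occupancy \<pi>0 s a) (at_right 0)" for s a
    unfolding x_def by (auto intro!: tendsto_eq_intros)
  have x_visited: "\<forall>\<^sub>F \<epsilon> in at_right 0. \<forall>a. 0 < x \<epsilon> s a" if "state_occupancy \<pi>0 s \<noteq> 0" for s
  proof (intro eventually_all_finite allI)
    fix a
    have "0 < occupancy \<pi>0 s a"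
      using that state_occupancy_nonneg[OF \<pi>0_policy, of s] \<pi>0
      by (simp add: occupancy_def pos_policies_def)
    then show "\<forall>\<^sub>F \<epsilon> in at_right 0. 0 < x \<epsilon> s a"
      by (rule order_tendstoD(1)[OF x_lim])
  qed
  have "\<forall>\<^sub>F \<epsilon> in at_right 0. \<forall>s. (\<forall>a. 0 < x \<epsilon> s a) \<or> (\<forall>a. x \<epsilon> s a = 0)"
  proof (intro eventually_all_finite allI)
    fix s
    show "\<forall>\<^sub>F \<epsilon> in at_right 0. (\<forall>a. 0 < x \<epsilon> s a) \<or> (\<forall>a. x \<epsilon> s a = 0)"
      using x_visited[of s] x_unvisited[of s]
      by (cases "state_occupancy \<pi>0 s = 0") (auto elim: eventually_mono)
  qed
  then have "\<forall>\<^sub>F \<epsilon> in at_right 0. p \<epsilon> \<in> pos_policies \<and> occupancy (p \<epsilon>) = x \<epsilon>"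
  proof eventually_elim
    case (elim \<epsilon>)
    then have "p \<epsilon> \<in> pos_policies"
      unfolding p_def using induced_policy_pos[OF \<pi>0] by blast
    moreover have "occupancy (p \<epsilon>) = x \<epsilon>"
      using \<open>p \<epsilon> \<in> pos_policies\<close> pos_policies_subset_policies elim
      by (auto simp: p_def intro!: occupancy_eq_if_flow x_flow factor_induced_policy)
    ultimately show ?case ..
  qed
  moreover have "(p \<longlongrightarrow> \<pi>0) (at_right 0)"
    using tendsto_induced_policy[where y = "occupancy \<pi>0" and \<pi> = \<pi>0, OF x_lim] x_unvisited
    by (simp add: p_def sum_occupancy induced_policy_occupancy \<pi>0_policy)
  ultimately show ?thesis
    unfolding x_def by blast
qed

lemma value_gaps_in_image_occupancy_directions:
  assumes "\<pi> \<in> policies" "\<pi>' \<in> policies" "\<pi>0 \<in> pos_policies"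
  shows "(J T d0 \<gamma> R \<pi> - J T d0 \<gamma> R \<pi>', J T d0 \<gamma> R' \<pi> - J T d0 \<gamma> R' \<pi>')
    \<in> (\<lambda>v. (sa_inner v R, sa_inner v R')) ` occupancy_directions \<pi>0"
  using assms(1,2)
  by (intro image_eqI[OF _ occupancy_diff_in_directions[OF assms]])
     (simp add: sa_inner_diff J_eq_sa_inner_occupancy)

lemma hackable_if_direction_with_opposite_values:
  assumes U: "openin (top_of_set pos_policies) U" "U \<subseteq> Pol" "\<pi>0 \<in> U"
    and v: "v \<in> occupancy_directions \<pi>0"
    and opposite: "sa_inner v R * sa_inner v R' < 0"
  shows "hackable T d0 \<gamma> Pol R R'"
proof -
  obtain S where S: "open S" "U = pos_policies \<inter> S"
    using U(1) by (auto simp: openin_open)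
  have \<pi>0: "\<pi>0 \<in> pos_policies" "\<pi>0 \<in> S"
    using U(3) S(2) by auto
  obtain p where p_lim: "(p \<longlongrightarrow> \<pi>0) (at_right 0)"
    and p_occupancy: "\<forall>\<^sub>F \<epsilon> in at_right 0. p \<epsilon> \<in> pos_policies \<and>
       occupancy (p \<epsilon>) = (\<lambda>s a. occupancy \<pi>0 s a + \<epsilon> * v s a)"
    using occupancy_perturbation[OF \<pi>0(1) v] by blast
  have "\<forall>\<^sub>F \<epsilon> in at_right 0. 0 < \<epsilon> \<and> p \<epsilon> \<in> S \<and> p \<epsilon> \<in> pos_policies \<and>
       occupancy (p \<epsilon>) = (\<lambda>s a. occupancy \<pi>0 s a + \<epsilon> * v s a)"
    using eventually_at_right_less topological_tendstoD[OF p_lim S(1) \<pi>0(2)] p_occupancy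
    by eventually_elim blast
  then obtain \<epsilon> :: real where \<epsilon>: "0 < \<epsilon>" "p \<epsilon> \<in> S" "p \<epsilon> \<in> pos_policies"
    "occupancy (p \<epsilon>) = (\<lambda>s a. occupancy \<pi>0 s a + \<epsilon> * v s a)"
    using eventually_happens'[OF trivial_limit_at_right_real] by blast
  have in_Pol: "p \<epsilon> \<in> Pol" "\<pi>0 \<in> Pol"
    using \<epsilon> S U by auto
  have "p \<epsilon> \<in> policies" "\<pi>0 \<in> policies"
    using \<epsilon>(3) \<pi>0(1) pos_policies_subset_policies by blast+
  then have J_p: "J T d0 \<gamma> Q (p \<epsilon>) = J T d0 \<gamma> Q \<pi>0 + \<epsilon> * sa_inner v Q" for Q
    by (simp add: J_eq_sa_inner_occupancy \<epsilon>(4) sa_inner_add sa_inner_scale)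
  from opposite consider "0 < sa_inner v R" "sa_inner v R' < 0" | "sa_inner v R < 0" "0 < sa_inner v R'"
    by (auto simp: mult_less_0_iff)
  then show ?thesis
    using in_Pol J_p \<epsilon>(1) unfolding hackable_def
    by cases (metis add.right_neutral add_strict_left_mono mult_pos_neg mult_pos_pos)+
qed

end

theorem mainTheorem13:
  fixes T :: "'s::finite \<Rightarrow> 'a::finite \<Rightarrow> 's \<Rightarrow> real"
    and d0 :: "'s \<Rightarrow> real" and \<gamma> :: real
    and Pol :: "('s \<Rightarrow> 'a \<Rightarrow> real) set"
    and R R' :: "'s \<Rightarrow> 'a \<Rightarrow> real"
  assumes env: "environment T d0 \<gamma>"
    and stat: "Pol \<subseteq> policies"
    and open_sub: "\<exists>U. U \<noteq> {} \<and> U \<subseteq> Pol \<and> openin (top_of_set pos_policies) U"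
    and nontriv1: "\<not> trivial_on (J T d0 \<gamma> R) Pol"
    and nontriv2: "\<not> trivial_on (J T d0 \<gamma> R') Pol"
    and noneq: "\<not> equivalent_on (J T d0 \<gamma> R) (J T d0 \<gamma> R') Pol"
  shows "hackable T d0 \<gamma> Pol R R'"
proof (rule ccontr)
  assume not_hackable: "\<not> hackable T d0 \<gamma> Pol R R'"
  interpret discounted_mdp T d0 \<gamma>
    using env by unfold_locales (auto simp: environment_def)
  obtain U \<pi>0 where U: "openin (top_of_set pos_policies) U" "U \<subseteq> Pol" "\<pi>0 \<in> U"
    using open_sub by blast
  have \<pi>0: "\<pi>0 \<in> pos_policies"
    using U(1,3) openin_imp_subset by fastforce
  let ?K = "(\<lambda>v. (sa_inner v R, sa_inner v R')) ` occupancy_directions \<pi>0"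
  have gaps: "(J T d0 \<gamma> R \<pi> - J T d0 \<gamma> R \<pi>', J T d0 \<gamma> R' \<pi> - J T d0 \<gamma> R' \<pi>') \<in> ?K"
    if "\<pi> \<in> Pol" "\<pi>' \<in> Pol" for \<pi> \<pi>'
    using value_gaps_in_image_occupancy_directions[OF _ _ \<pi>0] that stat by blast
  have closed_quadrants: "0 \<le> x * y" if "(x, y) \<in> ?K" for x y
    using that hackable_if_direction_with_opposite_values[OF U] not_hackable
    by (force simp: not_less[symmetric])
  obtain p1 q1 where "p1 \<in> Pol" "q1 \<in> Pol" "J T d0 \<gamma> R p1 \<noteq> J T d0 \<gamma> R q1"
    using nontriv1 by (auto simp: trivial_on_def)
  moreover obtain p2 q2 where "p2 \<in> Pol" "q2 \<in> Pol" "J T d0 \<gamma> R' p2 \<noteq> J T d0 \<gamma> R' q2"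
    using nontriv2 by (auto simp: trivial_on_def)
  moreover obtain p q where p_q: "p \<in> Pol" "q \<in> Pol"
    "\<not> (J T d0 \<gamma> R q \<le> J T d0 \<gamma> R p \<longleftrightarrow> J T d0 \<gamma> R' q \<le> J T d0 \<gamma> R' p)"
    using noneq by (auto simp: equivalent_on_def)
  ultimately have "sgn (J T d0 \<gamma> R p - J T d0 \<gamma> R q) = sgn (J T d0 \<gamma> R' p - J T d0 \<gamma> R' q)"
    by (intro sgn_fst_eq_sgn_snd_if_subspace_in_closed_quadrants[OF
          subspace_sa_inner_image_occupancy_directions closed_quadrants gaps _ gaps _ gaps]) auto
  with p_q(3) show False
    by (auto simp: sgn_if split: if_splits)
qed

end
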